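(* Let $w\in\mathbb R^5$ and suppose $\Sigma^w(\mathbf R_i)\ge\Sigma^w(\mathbf I)$ for all $1\le i\le 5$. Then for every reduced word $\mathbf U=\mathbf R_i\mathbf U'$ over $\{\mathbf R_1,\dots,\mathbf R_5\}$ (evaluated as a product of matrices), $\Sigma^w(\mathbf U)\ge\Sigma^w(\mathbf U')$.
   Context: Let $\mathbf e\in\mathbb R^5$ be the all-ones vector, $\mathbf e_i$ the $i$-th standard basis vector, $\mathbf I$ the $5\times5$ identity. For $1\le i\le 5$, $\mathbf R_i=\mathbf I+\mathbf e_i\mathbf e^\intercal-3\mathbf e_i\mathbf e_i^\intercal$ (the matrix equal to $\mathbf I$ except that its $i$-th row has diagonal entry $-1$ and all off-diagonal entries $1$). For a $5\times 5$ matrix $\mathbf U$, its weighted mass is $\Sigma^w(\mathbf U)=\mathbf e^\intercal\mathbf U w$. A word $\mathbf U_1\mathbf U_2\cdots\mathbf U_n$ with letters in $\{\mathbf R_1,\dots,\mathbf R_5\}$ is reduced if it contains no (consecutive) subword of the form $\mathbf R_i\mathbf R_i$, and no subword $\mathbf V_1\mathbf V_2\cdots\mathbf V_{2m}$ with $m\ge2$, $\mathbf V_1=\mathbf V_3$, $\mathbf V_{2m-2}=\mathbf V_{2m}$ and $\mathbf V_{2j}=\mathbf V_{2j+3}$ for $1\le j\le m-2$ (in particular no subword $(\mathbf R_i\mathbf R_j)^2$). *)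

theory Defs
  imports "HOL-Analysis.Analysis" "HOL-Library.Numeral_Type"
begin

type_synonym mat5 = "real ^ 5 ^ 5"

definition ones :: "real ^ 5" where "ones = (\<chi> k. 1)"

definition evec :: "5 \<Rightarrow> real ^ 5" where "evec i = axis i 1"

definition outer :: "real ^ 5 \<Rightarrow> real ^ 5 \<Rightarrow> mat5" where
  "outer u v = (\<chi> r c. u $ r * v $ c)"

definition Rmat :: "5 \<Rightarrow> mat5" where
  "Rmat i = mat 1 + outer (evec i) ones - 3 *\<^sub>R outer (evec i) (evec i)"

definition wmass :: "real ^ 5 \<Rightarrow> mat5 \<Rightarrow> real" where
  "wmass w U = ones \<bullet> (U *v w)"

definition word_mat :: "5 list \<Rightarrow> mat5" where
  "word_mat ws = foldr (\<lambda>i M. Rmat i ** M) ws (mat 1)"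

text \<open>Forbidden pattern V_1 ... V_{2m}, m >= 2 (V_k = vs ! (k-1)).\<close>
definition forbidden_pattern :: "5 list \<Rightarrow> bool" where
  "forbidden_pattern vs \<longleftrightarrow> (\<exists>m::nat. m \<ge> 2 \<and> length vs = 2 * m \<and>
      vs ! 0 = vs ! 2 \<and> vs ! (2*m - 3) = vs ! (2*m - 1) \<and>
      (\<forall>j. 1 \<le> j \<and> j \<le> m - 2 \<longrightarrow> vs ! (2*j - 1) = vs ! (2*j + 2)))"

definition reduced :: "5 list \<Rightarrow> bool" where
  "reduced ws \<longleftrightarrow>
     \<not> (\<exists>a x c. ws = a @ [x, x] @ c) \<and>
     \<not> (\<exists>a v c. ws = a @ v @ c \<and> forbidden_pattern v)"

end

theory Submission
  imports Defs
begin

text \<open>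
  For a matrix \<open>U\<close> put \<open>x = U w\<close>; then \<open>\<Sigma>\<^sup>w(R\<^sub>k U) - \<Sigma>\<^sup>w(U) = \<Sigma>\<^sub>j x\<^sub>j - 3 x\<^sub>k\<close>.
  Prepending \<open>R\<^sub>b\<close> to \<open>U\<close> changes this vector of gains \<open>g\<close> like a reflection:
  \<open>g\<^sub>b \<mapsto> -g\<^sub>b\<close> and \<open>g\<^sub>k \<mapsto> g\<^sub>k + g\<^sub>b\<close> for \<open>k \<noteq> b\<close>; in particular the gains of
  \<open>xyxU\<close> and \<open>yxyU\<close> agree. The hypothesis says \<open>g(I) \<ge> 0\<close>, and \<open>g\<^sub>i(U') \<ge> 0\<close> for
  reduced \<open>iU'\<close> follows by induction on the length of \<open>U' = aU''\<close>: we have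
  \<open>g\<^sub>i(aU'') = g\<^sub>i(U'') + g\<^sub>a(U'')\<close>, the second term is nonnegative by induction, and
  so is the first unless \<open>iU''\<close> is not reduced. In that case \<open>U''\<close> either starts
  with \<open>i\<close> or can be turned by braid moves into a word \<open>iF\<close> with \<open>aF\<close> reduced, and
  both times \<open>g\<^sub>i(aU'')\<close> is the \<open>a\<close>-gain of a shorter reduced word.
\<close>

definition coord_sum :: "real ^ 'n \<Rightarrow> real" where
  "coord_sum x = (\<Sum>k\<in>UNIV. x $ k)"

lemma wmass_eq_coord_sum: "wmass w U = coord_sum (U *v w)"
  unfolding wmass_def coord_sum_def ones_def inner_vec_def by simp

lemma Rmat_nth:
  "Rmat b $ k $ j = (if k = j then 1 else 0) + (if k = b then 1 else 0)
     - (if k = b \<and> j = b then 3 else 0)"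
  unfolding Rmat_def outer_def evec_def ones_def axis_def mat_def by auto

lemma Rmat_mult_vec_nth:
  "(Rmat b *v x) $ k = x $ k + (if k = b then coord_sum x - 3 * x $ b else 0)"
proof -
  have "(Rmat b *v x) $ k = (\<Sum>j\<in>UNIV. ((if k = j then 1 else 0) + (if k = b then 1 else 0)
      - (if k = b \<and> j = b then 3 else 0)) * x $ j)"
    unfolding matrix_vector_mult_def by (simp add: Rmat_nth)
  also have "\<dots> = (\<Sum>j\<in>UNIV. (if k = j then x $ j else 0))
      + (\<Sum>j\<in>UNIV. (if k = b then x $ j else 0))
      - (\<Sum>j\<in>UNIV. (if k = b \<and> j = b then 3 * x $ j else 0))"
    unfolding sum_subtractf[symmetric] sum.distrib[symmetric]
    by (rule sum.cong) (auto simp: algebra_simps)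
  finally show ?thesis by (auto simp: coord_sum_def)
qed

lemma coord_sum_Rmat_mult_vec: "coord_sum (Rmat b *v x) = 2 * coord_sum x - 3 * x $ b"
  unfolding coord_sum_def[of "Rmat b *v x"] Rmat_mult_vec_nth
  by (simp add: sum.distrib coord_sum_def)

lemma word_mat_Nil [simp]: "word_mat [] = mat 1"
  unfolding word_mat_def by simp

lemma word_mat_Cons [simp]: "word_mat (b # s) = Rmat b ** word_mat s"
  unfolding word_mat_def by simp

definition gain :: "real ^ 5 \<Rightarrow> 5 list \<Rightarrow> 5 \<Rightarrow> real" where
  "gain w s k = wmass w (word_mat (k # s)) - wmass w (word_mat s)"

lemma gain_eq: "gain w s k = coord_sum (word_mat s *v w) - 3 * (word_mat s *v w) $ k"
  unfolding gain_def wmass_eq_coord_sum word_mat_Cons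
    matrix_vector_mul_assoc[symmetric] coord_sum_Rmat_mult_vec
  by simp

lemma gain_Nil: "gain w [] k = wmass w (Rmat k) - wmass w (mat 1)"
  unfolding gain_def by simp

lemma gain_Cons:
  "gain w (b # s) k = (if k = b then - gain w s b else gain w s k + gain w s b)"
  unfolding gain_eq word_mat_Cons matrix_vector_mul_assoc[symmetric]
    coord_sum_Rmat_mult_vec Rmat_mult_vec_nth
  by (auto simp: algebra_simps)

lemma gain_Cons_cong: "gain w s = gain w s' \<Longrightarrow> gain w (x # s) = gain w (x # s')"
  by (rule ext) (simp add: gain_Cons)

lemma gain_braid: "gain w (x # y # x # t) = gain w (y # x # y # t)"
  by (rule ext) (auto simp: gain_Cons)

text \<open>
  \<open>braid_chain s\<close> says that \<open>s\<close> begins with \<open>V\<^sub>2 \<dots> V\<^sub>2\<^sub>m\<close> of a forbidden pattern,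
  whose missing first letter is then \<open>V\<^sub>1 = V\<^sub>3 = s ! 1\<close>.
\<close>
definition braid_chain :: "'a list \<Rightarrow> bool" where
  "braid_chain s \<longleftrightarrow> (\<exists>n. 2*n + 3 \<le> length s \<and> s!(2*n) = s!(2*n+2) \<and>
     (\<forall>i<n. s!(2*i) = s!(2*i+3)))"

lemma braid_chainE:
  assumes "braid_chain s"
  obtains x y z t where "s = x # y # z # t"
proof -
  have "Suc (Suc (Suc 0)) \<le> length s" using assms unfolding braid_chain_def by auto
  with that show thesis by (auto simp: Suc_le_length_iff)
qed

lemma braid_chain_Cons3:
  "braid_chain (x # y # z # t) \<longleftrightarrow> x = z \<or> (braid_chain (z # t) \<and> x = t!0)"
proof
  assume "braid_chain (x # y # z # t)"
  then obtain n where n: "2*n + 3 \<le> length (x # y # z # t)"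
    "(x # y # z # t)!(2*n) = (x # y # z # t)!(2*n+2)"
    "\<forall>i<n. (x # y # z # t)!(2*i) = (x # y # z # t)!(2*i+3)"
    unfolding braid_chain_def by blast
  show "x = z \<or> (braid_chain (z # t) \<and> x = t!0)"
  proof (cases n)
    case 0
    with n(2) show ?thesis by simp
  next
    case (Suc m)
    have "\<forall>i<m. (z # t)!(2*i) = (z # t)!(2*i+3)"
      using n(3) Suc by auto
    with n Suc have "braid_chain (z # t)"
      unfolding braid_chain_def by (intro exI[of _ m]) auto
    moreover have "x = t!0" using n(3) Suc by auto
    ultimately show ?thesis by blast
  qed
next
  assume "x = z \<or> (braid_chain (z # t) \<and> x = t!0)"
  then show "braid_chain (x # y # z # t)"
  proof
    assume "x = z"
    then show ?thesis unfolding braid_chain_def by (intro exI[of _ 0]) simp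
  next
    assume "braid_chain (z # t) \<and> x = t!0"
    then obtain m where m: "2*m + 3 \<le> length (z # t)" "(z # t)!(2*m) = (z # t)!(2*m+2)"
      "\<forall>i<m. (z # t)!(2*i) = (z # t)!(2*i+3)" and x: "x = t!0"
      unfolding braid_chain_def by blast
    have "\<forall>i<Suc m. (x # y # z # t)!(2*i) = (x # y # z # t)!(2*i+3)"
    proof (intro allI impI)
      fix i assume "i < Suc m"
      with m(3) x show "(x # y # z # t)!(2*i) = (x # y # z # t)!(2*i+3)"
        by (cases i) auto
    qed
    with m show ?thesis unfolding braid_chain_def by (intro exI[of _ "Suc m"]) auto
  qed
qed

lemma forbidden_pattern_Cons:
  "forbidden_pattern (c # v) \<longleftrightarrow> (\<exists>n. length v = 2*n + 3 \<and> c = v!1 \<and>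
     v!(2*n) = v!(2*n+2) \<and> (\<forall>i<n. v!(2*i) = v!(2*i+3)))"
proof
  assume "forbidden_pattern (c # v)"
  then obtain m where m: "m \<ge> 2" "length (c#v) = 2*m" "(c#v)!0 = (c#v)!2"
    "(c#v)!(2*m-3) = (c#v)!(2*m-1)"
    "\<forall>j. 1 \<le> j \<and> j \<le> m - 2 \<longrightarrow> (c#v)!(2*j-1) = (c#v)!(2*j+2)"
    unfolding forbidden_pattern_def by blast
  then obtain n where n: "m = n + 2" by (metis add.commute le_Suc_ex)
  have "\<forall>i<n. v!(2*i) = v!(2*i+3)"
  proof (intro allI impI)
    fix i assume "i < n"
    with m(5)[rule_format, of "i+1"] n have "(c#v)!(2*(i+1)-1) = (c#v)!(2*(i+1)+2)" by simp
    then show "v!(2*i) = v!(2*i+3)" by (simp add: numeral_3_eq_3)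
  qed
  with m n show "\<exists>n. length v = 2*n + 3 \<and> c = v!1 \<and>
     v!(2*n) = v!(2*n+2) \<and> (\<forall>i<n. v!(2*i) = v!(2*i+3))"
    by (intro exI[of _ n]) (simp add: numeral_2_eq_2 numeral_3_eq_3)
next
  assume "\<exists>n. length v = 2*n + 3 \<and> c = v!1 \<and>
     v!(2*n) = v!(2*n+2) \<and> (\<forall>i<n. v!(2*i) = v!(2*i+3))"
  then obtain n where n: "length v = 2*n + 3" "c = v!1" "v!(2*n) = v!(2*n+2)"
    "\<forall>i<n. v!(2*i) = v!(2*i+3)" by blast
  have "(c#v)!(2*j-1) = (c#v)!(2*j+2)" if "1 \<le> j" "j \<le> n" for j
    using n(4) that by (cases j) (simp_all add: numeral_3_eq_3)
  with n show "forbidden_pattern (c # v)"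
    unfolding forbidden_pattern_def
    by (intro exI[of _ "n+2"]) (simp add: numeral_2_eq_2 numeral_3_eq_3)
qed

lemma forbidden_prefix_iff_braid_chain:
  "(\<exists>v u. s = v @ u \<and> forbidden_pattern (c # v)) \<longleftrightarrow> braid_chain s \<and> c = s!1"
proof
  assume "\<exists>v u. s = v @ u \<and> forbidden_pattern (c # v)"
  then obtain v u n where s: "s = v @ u" and n: "length v = 2*n + 3" "c = v!1"
    "v!(2*n) = v!(2*n+2)" "\<forall>i<n. v!(2*i) = v!(2*i+3)"
    unfolding forbidden_pattern_Cons by blast
  have "s!k = v!k" if "k < 2*n + 3" for k
    using s n(1) that by (simp add: nth_append)
  with s n show "braid_chain s \<and> c = s!1"
    unfolding braid_chain_def by (intro conjI exI[of _ n]) auto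
next
  assume "braid_chain s \<and> c = s!1"
  then obtain n where n: "2*n + 3 \<le> length s" "s!(2*n) = s!(2*n+2)"
    "\<forall>i<n. s!(2*i) = s!(2*i+3)" and c: "c = s!1"
    unfolding braid_chain_def by blast
  then have "forbidden_pattern (c # take (2*n + 3) s)"
    unfolding forbidden_pattern_Cons by (intro exI[of _ n]) auto
  then show "\<exists>v u. s = v @ u \<and> forbidden_pattern (c # v)"
    by (metis append_take_drop_id)
qed

lemma square_factor_Cons:
  "(\<exists>a x u. c # s = a @ [x, x] @ u) \<longleftrightarrow> (\<exists>a x u. s = a @ [x, x] @ u) \<or> (s \<noteq> [] \<and> c = hd s)"
  by (auto simp: Cons_eq_append_conv) (metis list.collapse)

lemma forbidden_pattern_nonempty: "forbidden_pattern v \<Longrightarrow> v \<noteq> []"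
  unfolding forbidden_pattern_def by auto

lemma forbidden_factor_Cons:
  "(\<exists>a v u. c # s = a @ v @ u \<and> forbidden_pattern v) \<longleftrightarrow>
   (\<exists>a v u. s = a @ v @ u \<and> forbidden_pattern v) \<or> (\<exists>v u. s = v @ u \<and> forbidden_pattern (c # v))"
  by (auto simp: Cons_eq_append_conv dest: forbidden_pattern_nonempty) (metis append_Cons)

lemma reduced_Cons_iff:
  "reduced (c # s) \<longleftrightarrow>
     reduced s \<and> (s \<noteq> [] \<longrightarrow> c \<noteq> hd s) \<and> \<not> (braid_chain s \<and> c = s!1)"
  unfolding reduced_def square_factor_Cons forbidden_factor_Cons forbidden_prefix_iff_braid_chain
  by blast

lemma reduced_Cons_Cons:
  assumes "reduced (y # s)" "x \<noteq> y" "s \<noteq> [] \<Longrightarrow> x \<noteq> hd s"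
  shows "reduced (x # y # s)"
  using assms by (cases s) (auto simp: reduced_Cons_iff elim: braid_chainE)

lemma reduced_skip_third:
  assumes "reduced (b # c # b # t)"
  shows "reduced (b # c # t)"
proof (rule reduced_Cons_Cons)
  have t: "reduced t" "t \<noteq> [] \<Longrightarrow> b \<noteq> hd t"
    and bc: "b \<noteq> c" and no_chain: "\<not> braid_chain (c # b # t)"
    using assms by (auto simp: reduced_Cons_iff)
  show "b \<noteq> c" by (fact bc)
  show "b \<noteq> hd t" if "t \<noteq> []" using t(2) that .
  from no_chain t(1) show "reduced (c # t)"
    by (cases t) (auto simp: reduced_Cons_iff braid_chain_Cons3 elim: braid_chainE)
qed

text \<open>
  Braid moves \<open>aba \<mapsto> bab\<close>, applied from the end of a braid chain \<open>x y z \<dots>\<close> back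
  to its start, turn it into a word beginning with \<open>y\<close>.
\<close>
fun braid_shift :: "'a list \<Rightarrow> 'a list" where
  "braid_shift (x # y # z # t) =
     (if x = z then y # x # y # t else y # x # y # tl (braid_shift (z # t)))"
| "braid_shift s = s"

lemma length_braid_shift: "length (braid_shift s) = length s"
  by (induction s rule: braid_shift.induct) auto

lemma braid_shift_Cons3E:
  obtains R where "braid_shift (x # y # z # t) = y # x # y # R"
  by (metis braid_shift.simps(1))

lemma gain_braid_shift: "braid_chain s \<Longrightarrow> gain w (braid_shift s) = gain w s"
proof (induction s rule: braid_shift.induct)
  case (1 x y z t)
  show ?case
  proof (cases "x = z")
    case True
    then show ?thesis using gain_braid[of w x y t] by simp
  next
    case False
    with "1.prems" have chain: "braid_chain (z # t)" and "x = t!0"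
      by (auto simp: braid_chain_Cons3)
    then obtain u v where "t = x # u # v" by (auto elim: braid_chainE)
    then have shift: "braid_shift (z # t) = x # tl (braid_shift (z # t))"
      by simp
    have "gain w (x # y # z # t) = gain w (x # y # braid_shift (z # t))"
      using "1.IH"[OF False chain] by (intro gain_Cons_cong) simp
    also have "\<dots> = gain w (y # x # y # tl (braid_shift (z # t)))"
      by (subst shift) (rule gain_braid)
    finally show ?thesis using False by simp
  qed
qed (auto simp: braid_chain_def)

lemma reduced_tl_braid_shift: "reduced s \<Longrightarrow> braid_chain s \<Longrightarrow> reduced (tl (braid_shift s))"
proof (induction s rule: braid_shift.induct)
  case (1 x y z t)
  show ?case
  proof (cases "x = z")
    case True
    then show ?thesis using "1.prems"(1) by (simp add: reduced_skip_third)
  next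
    case False
    with "1.prems"(2) have chain: "braid_chain (z # t)" and "x = t!0"
      by (auto simp: braid_chain_Cons3)
    then obtain u v where "t = x # u # v" by (auto elim: braid_chainE)
    then obtain R where shift: "tl (braid_shift (z # t)) = z # x # R"
      by (metis braid_shift_Cons3E list.sel(3))
    have "reduced (z # t)" and yz: "y \<noteq> z" and xy: "x \<noteq> y"
      using "1.prems"(1) by (auto simp: reduced_Cons_iff)
    with "1.IH"[OF False _ chain] shift have "reduced (z # x # R)" by simp
    then have "reduced (y # z # x # R)"
      using reduced_Cons_Cons[of z "x # R" y] yz xy by auto
    then have "reduced (x # y # z # x # R)"
      using reduced_Cons_Cons[of y "z # x # R" x] xy False by auto
    with False shift show ?thesis by simp
  qed
qed (auto simp: braid_chain_def)

lemma gain_nonneg_if_reduced: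
  assumes gain_Nil_nonneg: "\<And>k. 0 \<le> gain w [] k" and "reduced (c # s)"
  shows "0 \<le> gain w s c"
  using assms(2)
proof (induction "length s" arbitrary: s c rule: less_induct)
  case less
  show ?case
  proof (cases s)
    case Nil
    then show ?thesis using gain_Nil_nonneg by simp
  next
    case (Cons a s1)
    have red_a: "reduced (a # s1)" and ca: "c \<noteq> a"
      using less.prems Cons by (auto simp: reduced_Cons_iff)
    consider "reduced (c # s1)" | s2 where "s1 = c # s2" | "braid_chain s1" "c = s1!1"
      using red_a reduced_Cons_iff[of a s1] reduced_Cons_iff[of c s1] by (cases s1) auto
    then show ?thesis
    proof cases
      case 1
      have "0 \<le> gain w s1 a" using less.hyps[of s1 a] red_a Cons by simp
      moreover have "0 \<le> gain w s1 c" using less.hyps[of s1 c] 1 Cons by simp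
      ultimately show ?thesis using ca Cons by (simp add: gain_Cons)
    next
      case (2 s2)
      have "reduced (a # s2)"
        using reduced_skip_third[of c a s2] less.prems Cons 2 by (simp add: reduced_Cons_iff)
      then have "0 \<le> gain w s2 a" using less.hyps[of s2 a] Cons 2 by simp
      then show ?thesis using ca Cons 2 by (simp add: gain_Cons)
    next
      case 3
      then obtain b z t where s1: "s1 = b # c # z # t" by (auto elim: braid_chainE)
      then obtain R where shift: "braid_shift s1 = c # b # c # R" by (metis braid_shift_Cons3E)
      have "reduced (b # c # R)"
        using reduced_tl_braid_shift[of s1] red_a 3 shift by (simp add: reduced_Cons_iff)
      moreover have "a \<noteq> b" using red_a s1 by (simp add: reduced_Cons_iff)
      ultimately have "reduced (a # b # c # R)"
        using reduced_Cons_Cons[of b "c # R" a] ca by auto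
      moreover have "length (b # c # R) < length s"
        using length_braid_shift[of s1] shift Cons by simp
      ultimately have "0 \<le> gain w (b # c # R) a" using less.hyps by blast
      moreover have "gain w s = gain w (a # c # b # c # R)"
        using gain_Cons_cong[OF gain_braid_shift[OF 3(1)], of w a] shift Cons by simp
      ultimately show ?thesis using ca by (simp add: gain_Cons)
    qed
  qed
qed

theorem lemma4p4:
  fixes w :: "real ^ 5" and i :: 5 and ws :: "5 list"
  assumes "\<forall>k::5. wmass w (Rmat k) \<ge> wmass w (mat 1)"
    and "reduced (i # ws)"
  shows "wmass w (word_mat (i # ws)) \<ge> wmass w (word_mat ws)"
proof -
  have "0 \<le> gain w ws i"
    using gain_nonneg_if_reduced[OF _ assms(2)] assms(1) by (simp add: gain_Nil)
  then show ?thesis unfolding gain_def by simp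
qed

end
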